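(* The generating function of the diagonal sums $\sum_{k \ge 1} w(n-k,k)$ (with $w(m,k)=0$ for $m<0$) is \[ \sum_{n \ge 0} \Bigl(\sum_{k \ge 1} w(n-k,k)\Bigr) q^n = \frac{q^6}{(1 - q)^3 (1 + q) (1 - 2 q^2)}. \]
   Context: A composition of $n \ge 0$ is a finite sequence $(c_1,\dots,c_t)$ of positive integers with $c_1+\cdots+c_t=n$; the empty composition is the unique composition of $0$. Let $C_{12}(n)$ be the set of compositions of $n$ all of whose parts lie in $\{1,2\}$. The number of water cells of a composition $(c_1,\dots,c_t)$ is $\sum_{i=1}^{t} \max\bigl(0, \min(\max_{j \le i} c_j, \max_{j \ge i} c_j) - c_i\bigr)$ (the number of unit squares that would hold water poured over its bargraph, in which column $i$ has height $c_i$). For $n,k \ge 0$, $W(n,k)$ is the set of compositions in $C_{12}(n)$ with exactly $k$ water cells and $w(n,k)=|W(n,k)|$. *)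

theory Defs
  imports "HOL-Computational_Algebra.Formal_Power_Series"
begin

definition C12 :: "nat \<Rightarrow> nat list set" where
  "C12 n = {c. set c \<subseteq> {1, 2} \<and> sum_list c = n}"

text \<open>Number of water cells of a composition (column i has height c!i, 0-indexed).\<close>
definition water :: "nat list \<Rightarrow> nat" where
  "water c = (\<Sum>i<length c.
      nat (max 0 (int (min (Max (set (take (Suc i) c))) (Max (set (drop i c)))) - int (c ! i))))"

definition W :: "nat \<Rightarrow> nat \<Rightarrow> nat list set" where
  "W n k = {c \<in> C12 n. water c = k}"

definition w :: "nat \<Rightarrow> nat \<Rightarrow> nat" where
  "w n k = card (W n k)"

text \<open>Diagonal sum: \<Sum>_{k\<ge>1} w(n-k,k), where w(m,k)=0 for m<0, i.e. only k \<le> n contribute.\<close>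
definition diag :: "nat \<Rightarrow> nat" where
  "diag n = (\<Sum>k\<in>{1..n}. w (n - k) k)"

end

theory Submission
  imports Defs
begin

text \<open>
  A composition with parts in \<open>{1, 2}\<close> holds water exactly at the parts 1 lying strictly
  between its first and its last part 2, one cell each. Hence the compositions with at least one
  water cell are the words \<open>1\<^sup>a 2 M 2 1\<^sup>b\<close> with \<open>M\<close> a \<open>{1, 2}\<close>-word containing a 1, and
  such a word lies on the diagonal \<open>a + b + \<Sum>M + #\<^sub>1M = a + b + 2|M| + 4\<close>. There are
  \<open>2\<^sup>s - 1\<close> admissible \<open>M\<close> of length \<open>s\<close>, with generating function
  \<open>q\<^sup>4 (1/(1 - 2q\<^sup>2) - 1/(1 - q\<^sup>2))\<close>, and the free paddings \<open>a\<close>, \<open>b\<close> contribute \<open>1/(1 - q)\<^sup>2\<close>.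
\<close>

definition trapped :: "nat list \<Rightarrow> nat \<Rightarrow> bool" where
  "trapped c i \<longleftrightarrow> c ! i = 1 \<and> 2 \<in> set (take i c) \<and> 2 \<in> set (drop (Suc i) c)"

lemma Max_subset_one_two:
  assumes "finite S" "S \<subseteq> {1, 2 :: nat}" "S \<noteq> {}"
  shows "Max S = (if 2 \<in> S then 2 else 1)"
proof (cases "2 \<in> S")
  case True
  then show ?thesis using assms by (intro Max_eqI) auto
next
  case False
  then have "S = {1}" using assms by auto
  then show ?thesis by simp
qed

lemma water_eq_card_trapped:
  assumes "set c \<subseteq> {1, 2}"
  shows "water c = card {i. i < length c \<and> trapped c i}"
proof -
  have "nat (max 0 (int (min (Max (set (take (Suc i) c))) (Max (set (drop i c)))) - int (c ! i)))
          = of_bool (trapped c i)" if i: "i < length c" for i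
  proof -
    have ci: "c ! i \<in> {1, 2}" using assms i nth_mem by blast
    have "set (take (Suc i) c) = insert (c ! i) (set (take i c))"
      using i by (simp add: take_Suc_conv_app_nth)
    moreover have "set (drop i c) = insert (c ! i) (set (drop (Suc i) c))"
      using i by (simp add: Cons_nth_drop_Suc[symmetric])
    moreover have "set (take i c) \<subseteq> {1, 2}" "set (drop (Suc i) c) \<subseteq> {1, 2}"
      using assms set_take_subset set_drop_subset by fastforce+
    ultimately show ?thesis
      using ci by (auto simp: Max_subset_one_two trapped_def)
  qed
  then have "water c = (\<Sum>i<length c. of_bool (trapped c i))"
    unfolding water_def by (intro sum.cong) auto
  then show ?thesis by (simp add: Collect_conj_eq lessThan_def)
qed

lemma water_Cons_one:
  assumes "set c \<subseteq> {1, 2}"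
  shows "water (1 # c) = water c"
proof -
  have "{i. i < length (1 # c) \<and> trapped (1 # c) i} = Suc ` {i. i < length c \<and> trapped c i}"
    by (force simp: trapped_def image_iff less_Suc_eq_0_disj)
  then show ?thesis
    using assms by (simp add: water_eq_card_trapped card_image)
qed

lemma water_snoc_one:
  assumes "set c \<subseteq> {1, 2}"
  shows "water (c @ [1]) = water c"
proof -
  have "trapped (c @ [1]) i \<longleftrightarrow> trapped c i" if "i < length c" for i
    using that by (simp add: trapped_def nth_append)
  then have "{i. i < length (c @ [1]) \<and> trapped (c @ [1]) i} = {i. i < length c \<and> trapped c i}"
    by (auto simp: trapped_def less_Suc_eq)
  then show ?thesis
    using assms by (simp add: water_eq_card_trapped)
qed

lemma water_replicate_one_append:
  "set c \<subseteq> {1, 2} \<Longrightarrow> water (replicate a 1 @ c) = water c"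
proof (induction a)
  case (Suc a)
  have "set (replicate a 1 @ c) \<subseteq> {1, 2}" using Suc.prems by auto
  then show ?case using Suc by (simp only: replicate_Suc append_Cons water_Cons_one)
qed simp

lemma water_append_replicate_one:
  "set c \<subseteq> {1, 2} \<Longrightarrow> water (c @ replicate b 1) = water c"
proof (induction b arbitrary: c)
  case (Suc b)
  have "set (c @ [1]) \<subseteq> {1, 2}" using Suc.prems by auto
  have "c @ replicate (Suc b) 1 = (c @ [1]) @ replicate b 1" by simp
  also have "water \<dots> = water (c @ [1])" using Suc.IH \<open>set (c @ [1]) \<subseteq> {1, 2}\<close> .
  also have "\<dots> = water c" using Suc.prems by (rule water_snoc_one)
  finally show ?case .
qed simp

lemma water_between_twos:
  assumes "set M \<subseteq> {1, 2}"
  shows "water (2 # M @ [2]) = count_list M 1"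
proof -
  have "trapped (2 # M @ [2]) (Suc j) \<longleftrightarrow> j < length M \<and> M ! j = 1" if "j \<le> length M" for j
    using that by (cases "j = length M") (auto simp: trapped_def nth_append)
  moreover have "\<not> trapped (2 # M @ [2]) 0"
    by (simp add: trapped_def)
  ultimately have "{i. i < length (2 # M @ [2]) \<and> trapped (2 # M @ [2]) i} = Suc ` {j. j < length M \<and> 1 = M ! j}"
    by (auto simp: less_Suc_eq_0_disj image_iff gr0_conv_Suc)
  then show ?thesis
    using assms by (simp add: water_eq_card_trapped card_image count_list_eq_length_filter
        length_filter_conv_card)
qed

lemma eq_replicate_if_set_subset:
  "set c \<subseteq> {x, y} \<Longrightarrow> y \<notin> set c \<Longrightarrow> c = replicate (length c) x"
  by (metis insertE singletonD subsetD replicate_length_same)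

definition walled :: "nat \<Rightarrow> nat list \<Rightarrow> nat \<Rightarrow> nat list" where
  "walled a M b = replicate a 1 @ 2 # M @ 2 # replicate b 1"

lemma set_walled_subset_iff: "set (walled a M b) \<subseteq> {1, 2} \<longleftrightarrow> set M \<subseteq> {1, 2}"
  by (auto simp: walled_def)

lemma water_walled:
  assumes "set M \<subseteq> {1, 2}"
  shows "water (walled a M b) = count_list M 1"
proof -
  have "set (2 # M @ [2]) \<subseteq> {1, 2}" "set ((2 # M @ [2]) @ replicate b 1) \<subseteq> {1, 2}"
    using assms by auto
  then show ?thesis
    unfolding walled_def using water_replicate_one_append water_append_replicate_one
      water_between_twos[OF assms] by (metis append_Cons append_assoc append_Nil)
qed

lemma sum_list_plus_count_ones:
  "set M \<subseteq> {1, 2} \<Longrightarrow> sum_list M + count_list M 1 = 2 * length M"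
  by (induction M) auto

lemma size_walled:
  assumes "set M \<subseteq> {1, 2}"
  shows "sum_list (walled a M b) + water (walled a M b) = a + b + 2 * length M + 4"
  using sum_list_plus_count_ones[OF assms]
  unfolding water_walled[OF assms] by (simp add: walled_def sum_list_replicate)

lemma takeWhile_one_walled: "takeWhile (\<lambda>x. x = 1) (walled a M b) = replicate a 1"
  by (induction a) (simp_all add: walled_def)

lemma rev_walled: "rev (walled a M b) = walled b (rev M) a"
  by (simp add: walled_def)

lemma walled_inject:
  assumes "walled a M b = walled a' M' b'"
  shows "a = a' \<and> M = M' \<and> b = b'"
proof -
  have a: "a = a'"
    using arg_cong[OF assms, of "\<lambda>c. length (takeWhile (\<lambda>x. x = 1) c)"]
    by (simp only: takeWhile_one_walled length_replicate)
  have b: "b = b'"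
    using arg_cong[OF assms, of "\<lambda>c. length (takeWhile (\<lambda>x. x = 1) (rev c))"]
    by (simp only: rev_walled takeWhile_one_walled length_replicate)
  show ?thesis
    using assms by (simp add: a b walled_def)
qed

lemma water_pos_imp_walled:
  assumes c: "set c \<subseteq> {1, 2}" and wet: "0 < water c"
  obtains a M b where "c = walled a M b"
proof -
  have "2 \<in> set c"
  proof (rule ccontr)
    assume "2 \<notin> set c"
    then have "water c = water (replicate (length c) 1 @ [])"
      using c eq_replicate_if_set_subset[of c 1 2] by fastforce
    also have "\<dots> = water []" by (rule water_replicate_one_append) simp
    finally show False using wet by (simp add: water_def)
  qed
  then obtain ys zs where c_eq: "c = ys @ 2 # zs" and "2 \<notin> set ys"
    using split_list_first by metis
  then have ys: "ys = replicate (length ys) 1"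
    using c eq_replicate_if_set_subset[of ys 1 2] by auto
  have zs: "set zs \<subseteq> {1, 2}" using c c_eq by auto
  have "2 \<in> set zs"
  proof (rule ccontr)
    assume "2 \<notin> set zs"
    then have "c = replicate (length ys) 1 @ [2] @ replicate (length zs) 1"
      using c_eq ys zs eq_replicate_if_set_subset[of zs 1 2] by simp
    then have "water c = water ([2] @ replicate (length zs) 1)"
      by (simp only:) (rule water_replicate_one_append, auto)
    also have "\<dots> = water [2]" by (rule water_append_replicate_one) simp
    finally show False using wet by (simp add: water_def)
  qed
  then obtain M ws where "zs = M @ 2 # ws" and "2 \<notin> set ws"
    using split_list_last by metis
  then have "c = walled (length ys) M (length ws)"
    using c_eq ys zs eq_replicate_if_set_subset[of ws 1 2] by (auto simp: walled_def)
  then show ?thesis by (rule that)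
qed

definition wet_interiors :: "nat list set" where
  "wet_interiors = {M. set M \<subseteq> {1, 2} \<and> 1 \<in> set M}"

lemma length_le_sum_list: "\<forall>x\<in>set c. 0 < x \<Longrightarrow> length c \<le> sum_list (c :: nat list)"
  by (induction c) auto

lemma finite_W: "finite (W m k)"
proof (rule finite_subset)
  show "W m k \<subseteq> {c. set c \<subseteq> {1, 2} \<and> length c \<le> m}"
    using length_le_sum_list by (fastforce simp: W_def C12_def)
qed (simp add: finite_lists_length_le)

lemma diag_eq_card_triples:
  "diag n = card {(a, b, M). M \<in> wet_interiors \<and> a + b + 2 * length M + 4 = n}"
    (is "_ = card ?T")
proof -
  let ?wet = "{c. set c \<subseteq> {1, 2} \<and> 0 < water c \<and> sum_list c + water c = n}"
  have "diag n = card (\<Union>k\<in>{1..n}. W (n - k) k)"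
    unfolding diag_def w_def by (rule card_UN_disjoint[symmetric]) (use finite_W in \<open>auto simp: W_def\<close>)
  also have "(\<Union>k\<in>{1..n}. W (n - k) k) = ?wet"
    by (auto simp: W_def C12_def intro!: bexI[where x = "water _"])
  also have "?wet = (\<lambda>(a, b, M). walled a M b) ` ?T"
  proof (intro equalityI subsetI)
    fix c assume c: "c \<in> ?wet"
    then obtain a M b where c_eq: "c = walled a M b"
      using water_pos_imp_walled by blast
    have M: "set M \<subseteq> {1, 2}" using c c_eq set_walled_subset_iff by blast
    have "1 \<in> set M"
      using c water_walled[OF M] count_list_0_iff[of M 1] by (simp add: c_eq)
    then show "c \<in> (\<lambda>(a, b, M). walled a M b) ` ?T"
      using c M size_walled[OF M] by (intro image_eqI[where x = "(a, b, M)"]) (auto simp: c_eq wet_interiors_def)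
  next
    fix c assume "c \<in> (\<lambda>(a, b, M). walled a M b) ` ?T"
    then obtain a b M where c_eq: "c = walled a M b" and M: "set M \<subseteq> {1, 2}" "1 \<in> set M"
      and size: "a + b + 2 * length M + 4 = n"
      by (auto simp: wet_interiors_def)
    then show "c \<in> ?wet"
      using set_walled_subset_iff size_walled[OF M(1)] water_walled[OF M(1)]
      by (simp add: count_list_0_iff flip: neq0_conv)
  qed
  also have "card \<dots> = card ?T"
    by (rule card_image) (auto simp: inj_on_def dest: walled_inject)
  finally show ?thesis .
qed

lemma card_padded_fiber:
  fixes h :: "'a \<Rightarrow> nat"
  assumes fin: "\<And>k. finite {x \<in> A. h x = k}"
  shows "card {(a, x). x \<in> A \<and> a + h x = n} = (\<Sum>k\<le>n. card {x \<in> A. h x = k})"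
proof -
  have "{(a, x). x \<in> A \<and> a + h x = n} = (\<lambda>(k, x). (n - k, x)) ` (SIGMA k:{..n}. {x \<in> A. h x = k})"
    by (auto simp: image_iff intro!: bexI[where x = "(h _, _)"])
  also have "card \<dots> = card (SIGMA k:{..n}. {x \<in> A. h x = k})"
    by (rule card_image) (auto simp: inj_on_def)
  also have "\<dots> = (\<Sum>k\<le>n. card {x \<in> A. h x = k})"
    using fin by simp
  finally show ?thesis .
qed

lemma fps_partial_sums:
  fixes f :: "nat \<Rightarrow> 'a :: comm_ring_1"
  shows "(1 - fps_X) * Abs_fps (\<lambda>n. \<Sum>k\<le>n. f k) = Abs_fps f"
proof (rule fps_ext)
  fix n
  show "fps_nth ((1 - fps_X) * Abs_fps (\<lambda>n. \<Sum>k\<le>n. f k)) n = fps_nth (Abs_fps f) n"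
    by (cases n) (simp_all add: left_diff_distrib fps_X_mult_nth)
qed

definition even_geometric_fps :: "'a :: comm_ring_1 \<Rightarrow> 'a fps" where
  "even_geometric_fps c = Abs_fps (\<lambda>n. if even n then c ^ (n div 2) else 0)"

lemma even_geometric_fps_mult: "even_geometric_fps c * (1 - fps_const c * fps_X ^ 2) = 1"
proof (rule fps_ext)
  fix n
  show "fps_nth (even_geometric_fps c * (1 - fps_const c * fps_X ^ 2)) n = fps_nth 1 n"
  proof (cases "n < 2")
    case True
    then consider "n = 0" | "n = 1" by linarith
    then show ?thesis
      by cases (simp_all add: right_diff_distrib fps_X_power_mult_right_nth
          mult.assoc[symmetric] mult.commute[of _ "fps_const c"] even_geometric_fps_def)
  next
    case False
    then obtain m where "n = m + 2" by (metis add.commute le_Suc_ex not_less)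
    then show ?thesis
      by (simp add: right_diff_distrib fps_X_power_mult_right_nth
          mult.assoc[symmetric] mult.commute[of _ "fps_const c"] even_geometric_fps_def)
  qed
qed

lemma card_wet_interiors_length: "card {M \<in> wet_interiors. length M = s} = 2 ^ s - 1"
proof -
  have "M = replicate s 2" if "set M \<subseteq> {1, 2}" "1 \<notin> set M" "length M = s" for M :: "nat list"
    using that eq_replicate_if_set_subset[of M 2 1] by (simp add: insert_commute)
  then have "{M \<in> wet_interiors. length M = s} = {M. set M \<subseteq> {1, 2} \<and> length M = s} - {replicate s 2}"
    by (auto simp: wet_interiors_def) (metis in_set_replicate n_not_Suc_n numeral_2_eq_2)
  moreover have "card {M. set M \<subseteq> {1, 2 :: nat} \<and> length M = s} = 2 ^ s"
    by (simp add: card_lists_length_eq numeral_2_eq_2)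
  moreover have "replicate s 2 \<in> {M. set M \<subseteq> {1, 2 :: nat} \<and> length M = s}"
    by (auto simp: set_replicate_conv_if)
  ultimately show ?thesis
    by (simp add: card_Diff_singleton finite_lists_length_eq)
qed

lemma diag_eq_iterated_sum:
  "diag n = (\<Sum>k\<le>n. \<Sum>j\<le>k. card {M \<in> wet_interiors. 2 * length M + 4 = j})"
proof -
  let ?s = "\<lambda>M :: nat list. 2 * length M + 4"
  let ?A = "{(b, M). M \<in> wet_interiors}"
  have fin: "finite {M \<in> wet_interiors. ?s M \<le> k}" for k
    by (rule finite_subset[of _ "{M. set M \<subseteq> {1, 2 :: nat} \<and> length M \<le> k}"])
      (auto simp: wet_interiors_def finite_lists_length_le)
  have inner: "card {x \<in> ?A. (\<lambda>(b, M). b + ?s M) x = k} = (\<Sum>j\<le>k. card {M \<in> wet_interiors. ?s M = j})"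
    for k
  proof -
    have "{x \<in> ?A. (\<lambda>(b, M). b + ?s M) x = k} = {(b, M). M \<in> wet_interiors \<and> b + ?s M = k}"
      by auto
    also have "card \<dots> = (\<Sum>j\<le>k. card {M \<in> wet_interiors. ?s M = j})"
      by (rule card_padded_fiber) (rule finite_subset[OF _ fin], auto)
    finally show ?thesis .
  qed
  have "{(a, b, M). M \<in> wet_interiors \<and> a + b + ?s M = n}
      = {(a, x). x \<in> ?A \<and> a + (\<lambda>(b, M). b + ?s M) x = n}"
    by auto
  then have "diag n = card {(a, x). x \<in> ?A \<and> a + (\<lambda>(b, M). b + ?s M) x = n}"
    by (simp only: diag_eq_card_triples add.assoc)
  also have "\<dots> = (\<Sum>k\<le>n. card {x \<in> ?A. (\<lambda>(b, M). b + ?s M) x = k})"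
  proof (rule card_padded_fiber)
    show "finite {x \<in> ?A. (\<lambda>(b, M). b + ?s M) x = k}" for k
      by (rule finite_subset[of _ "{..k} \<times> {M \<in> wet_interiors. ?s M \<le> k}"]) (use fin in auto)
  qed
  finally show ?thesis by (simp only: inner)
qed

lemma card_wet_interiors_weight:
  "card {M \<in> wet_interiors. 2 * length M + 4 = n}
     = (if 4 \<le> n \<and> even n then 2 ^ ((n - 4) div 2) - 1 else 0)"
proof (cases "4 \<le> n \<and> even n")
  case True
  then have "{M \<in> wet_interiors. 2 * length M + 4 = n} = {M \<in> wet_interiors. length M = (n - 4) div 2}"
    by auto
  then show ?thesis using True by (simp add: card_wet_interiors_length)
next
  case False
  then have none: "{M \<in> wet_interiors. 2 * length M + 4 = n} = {}"
    by auto
  show ?thesis unfolding none if_not_P[OF False] by simp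
qed

lemma fps_wet_interiors:
  "Abs_fps (\<lambda>n. of_nat (card {M \<in> wet_interiors. 2 * length M + 4 = n}))
     = (fps_X ^ 4 * (even_geometric_fps 2 - even_geometric_fps 1) :: 'a :: comm_ring_1 fps)"
proof (rule fps_ext)
  fix n
  have "of_nat (2 ^ s - 1) = (2 ^ s - 1 :: 'a)" for s :: nat
    by (simp add: of_nat_diff)
  then show "fps_nth (Abs_fps (\<lambda>n. of_nat (card {M \<in> wet_interiors. 2 * length M + 4 = n}))) n
      = fps_nth (fps_X ^ 4 * (even_geometric_fps 2 - even_geometric_fps 1) :: 'a fps) n"
    by (auto simp: card_wet_interiors_weight fps_X_power_mult_nth even_geometric_fps_def)
qed

lemma fps_diag_padding:
  "(1 - fps_X) ^ 2 * Abs_fps (\<lambda>n. of_nat (diag n))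
     = (fps_X ^ 4 * (even_geometric_fps 2 - even_geometric_fps 1) :: 'a :: comm_ring_1 fps)"
proof -
  let ?g = "\<lambda>j. of_nat (card {M \<in> wet_interiors. 2 * length M + 4 = j}) :: 'a"
  have "Abs_fps (\<lambda>n. of_nat (diag n)) = Abs_fps (\<lambda>n. \<Sum>k\<le>n. \<Sum>j\<le>k. ?g j)"
    by (simp add: diag_eq_iterated_sum)
  then have "(1 - fps_X) ^ 2 * Abs_fps (\<lambda>n. of_nat (diag n)) = Abs_fps ?g"
    by (simp add: power2_eq_square mult.assoc fps_partial_sums)
  then show ?thesis
    by (simp only: fps_wet_interiors)
qed

lemma fps_diag_times_denominator:
  "Abs_fps (\<lambda>n. of_nat (diag n)) * ((1 - fps_X) ^ 3 * (1 + fps_X) * (1 - 2 * fps_X ^ 2))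
     = (fps_X ^ 6 :: 'a :: comm_ring_1 fps)"
proof -
  let ?D = "Abs_fps (\<lambda>n. of_nat (diag n)) :: 'a fps"
  let ?E = "even_geometric_fps :: 'a \<Rightarrow> 'a fps"
  have E2: "?E 2 * (1 - 2 * fps_X ^ 2) = 1" and E1: "?E 1 * (1 - fps_X ^ 2) = 1"
    using even_geometric_fps_mult[of "2 :: 'a"] even_geometric_fps_mult[of "1 :: 'a"]
    by (simp_all add: numeral_fps_const)
  have "?D * ((1 - fps_X) ^ 3 * (1 + fps_X) * (1 - 2 * fps_X ^ 2))
      = ((1 - fps_X) ^ 2 * ?D) * (1 - fps_X ^ 2) * (1 - 2 * fps_X ^ 2)"
    by (simp add: algebra_simps power2_eq_square power3_eq_cube)
  also have "\<dots> = fps_X ^ 4 * ((?E 2 * (1 - 2 * fps_X ^ 2)) * (1 - fps_X ^ 2)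
      - (?E 1 * (1 - fps_X ^ 2)) * (1 - 2 * fps_X ^ 2))"
    unfolding fps_diag_padding by (simp add: algebra_simps)
  also have "\<dots> = fps_X ^ 6"
    unfolding E1 E2 by (simp add: algebra_simps flip: power_add)
  finally show ?thesis .
qed

theorem mainTheorem8:
  shows "(Abs_fps (\<lambda>n. of_nat (diag n)) :: rat fps) =
    fps_X ^ 6 / ((1 - fps_X) ^ 3 * (1 + fps_X) * (1 - 2 * fps_X ^ 2))"
proof -
  let ?P = "(1 - fps_X) ^ 3 * (1 + fps_X) * (1 - 2 * fps_X ^ 2) :: rat fps"
  have "?P \<noteq> 0"
    using fps_nonzeroI[of ?P 0] by (simp add: fps_power_zeroth)
  then show ?thesis
    using fps_diag_times_denominator by (metis nonzero_mult_div_cancel_right)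
qed

end
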